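(* Let $F$ be a minimally unsatisfiable clause-set and $(v,w)$ a singular tuple for $F$ with singularity-degree tuple $(1,1)$. Let $C,D\in F$ be the two clauses containing the variable $v$. 1. Assume $w$ is not 1-singular for $F$. Then $w$ is 2-singular for $F$; if $E_0\in F$ is its main clause and $E_1,E_2\in F$ its two side clauses, then $\{E_1,E_2\}=\{C,D\}$; $v$ is 1-singular for $\mathrm{DP}_w(F)$; and thus $(w,v)$ is a singular tuple for $F$ with singularity-degree tuple $(2,1)$. 2. Otherwise ($w$ is 1-singular for $F$): $v$ is 1-singular for $\mathrm{DP}_w(F)$; thus $(w,v)$ is a singular tuple for $F$ with singularity-degree tuple $(1,1)$; and if $E_1,E_2$ are the two clauses of $F$ containing the variable $w$, then $|\{C,D\}\cap\{E_1,E_2\}|\le1$.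
   Context: Literals are variables $v$ and complements $\overline{v}$; a clause is a finite set of literals with no complementary pair; a clause-set is a finite set of clauses; $\mathrm{ldeg}_F(x)$ is the number of clauses of $F$ containing literal $x$, $\mathrm{vdeg}_F(v)=\mathrm{ldeg}_F(v)+\mathrm{ldeg}_F(\overline{v})$. $\mathrm{DP}_v(F) := \{C \in F : v \notin \mathrm{var}(C)\} \cup \{(C \cup D)\setminus\{v,\overline{v}\} : C, D \in F,\ C \cap \overline{D} = \{v\}\}$; $\mathrm{DP}_{v,w}(F)=\mathrm{DP}_w(\mathrm{DP}_v(F))$. A variable $v$ is singular for $F$ if $\min(\mathrm{ldeg}_F(v),\mathrm{ldeg}_F(\overline{v}))=1$, $m$-singular if additionally $\mathrm{vdeg}_F(v)-1=m$; 1-singular means $\mathrm{ldeg}_F(v)=\mathrm{ldeg}_F(\overline{v})=1$. For a singular variable with singular literal $x$ (a literal of $v$ with $\mathrm{ldeg}_F(x)=1$), the main clause is the clause containing $x$ and the side clauses are those containing $\overline{x}$. For minimally unsatisfiable $F$, $(v,w)$ is a singular tuple if $v$ is singular for $F$ and $w$ is singular for $\mathrm{DP}_v(F)$; its singularity-degree tuple is $(m_1,m_2)$ where $v$ is $m_1$-singular for $F$ and $w$ is $m_2$-singular for $\mathrm{DP}_v(F)$. *)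

theory Defs
  imports Main
begin

datatype 'v lit = Pos 'v | Neg 'v

fun comp :: "'v lit \<Rightarrow> 'v lit" where
  "comp (Pos v) = Neg v" | "comp (Neg v) = Pos v"

fun var :: "'v lit \<Rightarrow> 'v" where
  "var (Pos v) = v" | "var (Neg v) = v"

type_synonym 'v clause = "'v lit set"

definition vars_cl :: "'v clause \<Rightarrow> 'v set" where
  "vars_cl C = var ` C"

definition is_clause :: "'v clause \<Rightarrow> bool" where
  "is_clause C \<longleftrightarrow> finite C \<and> (\<forall>x\<in>C. comp x \<notin> C)"

definition is_clause_set :: "'v clause set \<Rightarrow> bool" where
  "is_clause_set F \<longleftrightarrow> finite F \<and> (\<forall>C\<in>F. is_clause C)"

fun lit_val :: "('v \<Rightarrow> bool) \<Rightarrow> 'v lit \<Rightarrow> bool" where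
  "lit_val \<phi> (Pos v) = \<phi> v" | "lit_val \<phi> (Neg v) = (\<not> \<phi> v)"

definition sat :: "'v clause set \<Rightarrow> bool" where
  "sat F \<longleftrightarrow> (\<exists>\<phi>. \<forall>C\<in>F. \<exists>x\<in>C. lit_val \<phi> x)"

definition min_unsat :: "'v clause set \<Rightarrow> bool" where
  "min_unsat F \<longleftrightarrow> is_clause_set F \<and> \<not> sat F \<and> (\<forall>C\<in>F. sat (F - {C}))"

definition ldeg :: "'v clause set \<Rightarrow> 'v lit \<Rightarrow> nat" where
  "ldeg F x = card {C\<in>F. x \<in> C}"

definition vdeg :: "'v clause set \<Rightarrow> 'v \<Rightarrow> nat" where
  "vdeg F v = ldeg F (Pos v) + ldeg F (Neg v)"

definition DP :: "'v \<Rightarrow> 'v clause set \<Rightarrow> 'v clause set" where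
  "DP v F = {C\<in>F. v \<notin> vars_cl C} \<union>
     {(C \<union> D) - {Pos v, Neg v} | C D. C \<in> F \<and> D \<in> F \<and> C \<inter> comp ` D = {Pos v}}"

definition singular :: "'v clause set \<Rightarrow> 'v \<Rightarrow> bool" where
  "singular F v \<longleftrightarrow> min (ldeg F (Pos v)) (ldeg F (Neg v)) = 1"

definition m_singular :: "'v clause set \<Rightarrow> 'v \<Rightarrow> nat \<Rightarrow> bool" where
  "m_singular F v m \<longleftrightarrow> singular F v \<and> vdeg F v - 1 = m"

text \<open>Singular tuple (v,w) for F (F minimally unsatisfiable is assumed separately).\<close>
definition singular_tuple :: "'v clause set \<Rightarrow> 'v \<Rightarrow> 'v \<Rightarrow> bool" where
  "singular_tuple F v w \<longleftrightarrow> singular F v \<and> singular (DP v F) w"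

definition sdeg_tuple :: "'v clause set \<Rightarrow> 'v \<Rightarrow> 'v \<Rightarrow> nat \<Rightarrow> nat \<Rightarrow> bool" where
  "sdeg_tuple F v w m1 m2 \<longleftrightarrow> m_singular F v m1 \<and> m_singular (DP v F) w m2"

end

theory Submission
  imports Defs
begin

text \<open>Minimal unsatisfiability enters through one fact: every literal of a clause has a resolution
  partner clashing with that clause in this literal only. Hence eliminating a singular variable
  merges the main clause with each side clause, and for a 1-singular variable the resolvent is
  not already in \<open>F\<close>. So \<open>DP\<^sub>v\<close> keeps the degree of every literal of another variable, except
  that a literal lying in both \<open>C\<close> and \<open>D\<close> loses one occurrence. If a literal \<open>y\<close> of \<open>w\<close> lies in
  both, then \<open>w\<close> is 2-singular in \<open>F\<close> with side clauses \<open>C, D\<close>, and \<open>DP\<^sub>w\<close> puts the two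
  literals of \<open>v\<close> into two different resolvents. Otherwise \<open>w\<close> is 1-singular in \<open>F\<close>, and a literal
  of \<open>v\<close> could only lose its single occurrence by lying in both clauses of \<open>w\<close>; these clauses
  cannot be \<open>C, D\<close>, which clash in \<open>v\<close> alone.\<close>

lemma comp_comp [simp]: "comp (comp x) = x"
  by (cases x) auto

lemma var_comp [simp]: "var (comp x) = var x"
  by (cases x) auto

lemma lit_val_comp [simp]: "lit_val \<phi> (comp x) \<longleftrightarrow> \<not> lit_val \<phi> x"
  by (cases x) auto

lemma var_eq_iff: "var a = var b \<longleftrightarrow> a = b \<or> a = comp b"
  by (cases a; cases b) auto

lemma comp_image_iff: "z \<in> comp ` E \<longleftrightarrow> comp z \<in> E"
  by (metis comp_comp image_iff)

lemma var_in_vars_cl: "var y \<in> vars_cl E \<longleftrightarrow> y \<in> E \<or> comp y \<in> E"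
  unfolding vars_cl_def by (metis comp_comp image_iff var_eq_iff)

lemma Pos_Neg_eq: "var y = u \<Longrightarrow> {Pos u, Neg u} = {y, comp y}"
  by (cases y) auto

lemma comp_eq_iff: "comp a = b \<longleftrightarrow> a = comp b"
  by (cases a; cases b) auto

lemma clash_swap: "P \<inter> comp ` Q = {z} \<longleftrightarrow> Q \<inter> comp ` P = {comp z}"
proof -
  have clash_iff: "P \<inter> comp ` Q = {z} \<longleftrightarrow> (\<forall>a. a \<in> P \<and> comp a \<in> Q \<longleftrightarrow> a = z)" for P Q z
    by (auto simp: set_eq_iff comp_image_iff)
  have all_comp: "(\<forall>a. R a) \<longleftrightarrow> (\<forall>a. R (comp a))" for R :: "'a lit \<Rightarrow> bool"
    by (metis comp_comp)
  show ?thesis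
    unfolding clash_iff all_comp[of "\<lambda>a. a \<in> P \<and> comp a \<in> Q \<longleftrightarrow> a = z"]
    by (simp add: comp_eq_iff conj_commute)
qed

lemma DP_by_literal:
  assumes "var z = u"
  shows "DP u F = {E \<in> F. u \<notin> vars_cl E} \<union>
    {(P \<union> Q) - {Pos u, Neg u} | P Q. P \<in> F \<and> Q \<in> F \<and> P \<inter> comp ` Q = {z}}"
proof (cases z)
  case Neg
  with assms have "z = comp (Pos u)" by simp
  then show ?thesis
    unfolding DP_def clash_swap[of _ _ z] by (auto simp: Un_commute)
qed (use assms in \<open>simp add: DP_def\<close>)

lemma DP_var_notin: "E \<in> DP v F \<Longrightarrow> v \<notin> vars_cl E"
  using var_in_vars_cl[of "Pos v"] by (auto simp: DP_def)

lemma mem_singleton_occurrences: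
  "{E \<in> F. x \<in> E} = {P} \<Longrightarrow> E \<in> F \<Longrightarrow> x \<in> E \<longleftrightarrow> E = P"
  by (auto simp: set_eq_iff)

lemma min_unsat_finite: "min_unsat F \<Longrightarrow> finite F"
  by (simp add: min_unsat_def is_clause_set_def)

lemma min_unsat_comp_notin: "min_unsat F \<Longrightarrow> E \<in> F \<Longrightarrow> x \<in> E \<Longrightarrow> comp x \<notin> E"
  by (simp add: min_unsat_def is_clause_set_def is_clause_def)

lemma sat_by_setting_literal:
  assumes "\<forall>E \<in> F. y \<notin> E \<longrightarrow> (\<exists>a \<in> E. var a \<noteq> var y \<and> lit_val \<phi> a)"
  shows "sat F"
proof -
  define \<psi> where "\<psi> = \<phi>(var y := (y = Pos (var y)))"
  have "lit_val \<psi> y" by (cases y) (simp_all add: \<psi>_def)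
  moreover have "lit_val \<psi> a = lit_val \<phi> a" if "var a \<noteq> var y" for a
    using that by (cases a) (simp_all add: \<psi>_def)
  ultimately show ?thesis
    unfolding sat_def using assms by metis
qed

lemma min_unsat_remove_clause:
  assumes "min_unsat F" "P \<in> F"
  obtains \<phi> where "\<forall>E \<in> F - {P}. \<exists>a \<in> E. lit_val \<phi> a" "\<forall>a \<in> P. \<not> lit_val \<phi> a"
proof -
  from assms obtain \<phi> where \<phi>: "\<forall>E \<in> F - {P}. \<exists>a \<in> E. lit_val \<phi> a"
    by (auto simp: min_unsat_def sat_def)
  moreover have "\<forall>a \<in> P. \<not> lit_val \<phi> a"
    using assms \<phi> unfolding min_unsat_def sat_def by blast
  ultimately show ?thesis using that by blast
qed

lemma min_unsat_clash_partner:
  assumes MU: "min_unsat F" and "P \<in> F" "y \<in> P"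
  shows "\<exists>Q \<in> F. P \<inter> comp ` Q = {y}"
proof (rule ccontr)
  assume no_partner: "\<not> ?thesis"
  obtain \<phi> where \<phi>: "\<forall>E \<in> F - {P}. \<exists>a \<in> E. lit_val \<phi> a" and P_false: "\<forall>a \<in> P. \<not> lit_val \<phi> a"
    using min_unsat_remove_clause[OF MU \<open>P \<in> F\<close>] by blast
  have "comp y \<notin> P" using min_unsat_comp_notin[OF MU \<open>P \<in> F\<close> \<open>y \<in> P\<close>] .
  have "\<exists>a \<in> E. var a \<noteq> var y \<and> lit_val \<phi> a" if "E \<in> F" "y \<notin> E" for E
  proof (cases "comp y \<in> E")
    case True
    with \<open>y \<in> P\<close> have "y \<in> P \<inter> comp ` E" by (simp add: comp_image_iff)
    moreover have "P \<inter> comp ` E \<noteq> {y}" using no_partner \<open>E \<in> F\<close> by blast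
    ultimately obtain z where "z \<in> P" "z \<in> comp ` E" "z \<noteq> y"
      by blast
    then have "comp z \<in> E" by (simp add: comp_image_iff)
    moreover from \<open>z \<in> P\<close> \<open>z \<noteq> y\<close> \<open>comp y \<notin> P\<close> have "var (comp z) \<noteq> var y"
      by (auto simp: var_eq_iff)
    moreover have "lit_val \<phi> (comp z)"
      using P_false \<open>z \<in> P\<close> by simp
    ultimately show ?thesis by blast
  next
    case False
    from that \<open>y \<in> P\<close> have "E \<in> F - {P}" by auto
    with \<phi> obtain a where "a \<in> E" "lit_val \<phi> a" by blast
    with False \<open>y \<notin> E\<close> show ?thesis by (auto simp: var_eq_iff)
  qed
  then have "sat F" by (intro sat_by_setting_literal) blast
  with MU show False by (simp add: min_unsat_def)
qed

lemma min_unsat_resolvent_notin: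
  assumes MU: "min_unsat F"
    and P: "{E \<in> F. y \<in> E} = {P}" and Q: "{E \<in> F. comp y \<in> E} = {Q}"
  shows "(P \<union> Q) - {y, comp y} \<notin> F"
proof
  assume R: "(P \<union> Q) - {y, comp y} \<in> F"
  have "P \<in> F" "y \<in> P" using P by auto
  obtain \<phi> where \<phi>: "\<forall>E \<in> F - {P}. \<exists>a \<in> E. lit_val \<phi> a" and P_false: "\<forall>a \<in> P. \<not> lit_val \<phi> a"
    using min_unsat_remove_clause[OF MU \<open>P \<in> F\<close>] by blast
  from R \<open>y \<in> P\<close> have "(P \<union> Q) - {y, comp y} \<in> F - {P}" by auto
  with \<phi> obtain a where "a \<in> (P \<union> Q) - {y, comp y}" "lit_val \<phi> a" by blast
  with P_false have a: "a \<in> Q" "var a \<noteq> var y" "lit_val \<phi> a"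
    by (auto simp: var_eq_iff)
  have "\<exists>a \<in> E. var a \<noteq> var y \<and> lit_val \<phi> a" if "E \<in> F" "y \<notin> E" for E
  proof (cases "E = Q")
    case False
    with mem_singleton_occurrences[OF Q] that have "comp y \<notin> E" by blast
    from that \<open>y \<in> P\<close> have "E \<in> F - {P}" by auto
    with \<phi> obtain b where "b \<in> E" "lit_val \<phi> b" by blast
    with \<open>comp y \<notin> E\<close> \<open>y \<notin> E\<close> show ?thesis by (auto simp: var_eq_iff)
  qed (use a in blast)
  then have "sat F" by (intro sat_by_setting_literal) blast
  with MU show False by (simp add: min_unsat_def)
qed

lemma min_unsat_singular_clash_iff:
  assumes MU: "min_unsat F" and E0: "{E \<in> F. x \<in> E} = {E0}" and "P \<in> F" "Q \<in> F"
  shows "P \<inter> comp ` Q = {comp x} \<longleftrightarrow> comp x \<in> P \<and> Q = E0"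
proof
  assume "P \<inter> comp ` Q = {comp x}"
  then have "comp x \<in> P \<inter> comp ` Q" by simp
  then have "comp x \<in> P" "x \<in> Q" by (simp_all add: comp_image_iff)
  with mem_singleton_occurrences[OF E0 \<open>Q \<in> F\<close>] show "comp x \<in> P \<and> Q = E0" by blast
next
  assume "comp x \<in> P \<and> Q = E0"
  then obtain Q' where "Q' \<in> F" and clash: "P \<inter> comp ` Q' = {comp x}"
    using min_unsat_clash_partner[OF MU \<open>P \<in> F\<close>] by blast
  from clash have "comp x \<in> comp ` Q'" by blast
  then have "Q' = E0"
    using mem_singleton_occurrences[OF E0 \<open>Q' \<in> F\<close>] by (simp add: comp_image_iff)
  with clash \<open>comp x \<in> P \<and> Q = E0\<close> show "P \<inter> comp ` Q = {comp x}" by simp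
qed

lemma DP_singular:
  assumes MU: "min_unsat F" and E0: "{E \<in> F. x \<in> E} = {E0}"
  defines "S \<equiv> {E \<in> F. comp x \<in> E}"
  shows "DP (var x) F = (F - insert E0 S) \<union> (\<lambda>E. (E \<union> E0) - {x, comp x}) ` S"
proof -
  have "E0 \<in> F" using E0 by auto
  have "DP (var x) F = {E \<in> F. var x \<notin> vars_cl E} \<union>
      {(P \<union> Q) - {x, comp x} | P Q. P \<in> F \<and> Q \<in> F \<and> P \<inter> comp ` Q = {comp x}}"
    using DP_by_literal[of "comp x" "var x" F] Pos_Neg_eq[of x "var x"] by simp
  also have "{E \<in> F. var x \<notin> vars_cl E} = F - insert E0 S"
    using mem_singleton_occurrences[OF E0] by (auto simp: S_def var_in_vars_cl)
  also have "{(P \<union> Q) - {x, comp x} | P Q. P \<in> F \<and> Q \<in> F \<and> P \<inter> comp ` Q = {comp x}}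
      = (\<lambda>E. (E \<union> E0) - {x, comp x}) ` S"
  proof (intro equalityI subsetI)
    fix X assume "X \<in> {(P \<union> Q) - {x, comp x} | P Q. P \<in> F \<and> Q \<in> F \<and> P \<inter> comp ` Q = {comp x}}"
    then obtain P Q where "X = (P \<union> Q) - {x, comp x}" "P \<in> F" "Q \<in> F" "P \<inter> comp ` Q = {comp x}"
      by blast
    with min_unsat_singular_clash_iff[OF MU E0 \<open>P \<in> F\<close> \<open>Q \<in> F\<close>]
    show "X \<in> (\<lambda>E. (E \<union> E0) - {x, comp x}) ` S" by (simp add: S_def)
  next
    fix X assume "X \<in> (\<lambda>E. (E \<union> E0) - {x, comp x}) ` S"
    then obtain P where "P \<in> F" "comp x \<in> P" "X = (P \<union> E0) - {x, comp x}"
      by (auto simp: S_def)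
    with min_unsat_singular_clash_iff[OF MU E0 \<open>P \<in> F\<close> \<open>E0 \<in> F\<close>] \<open>E0 \<in> F\<close>
    show "X \<in> {(P \<union> Q) - {x, comp x} | P Q. P \<in> F \<and> Q \<in> F \<and> P \<inter> comp ` Q = {comp x}}"
      by blast
  qed
  finally show ?thesis .
qed

lemma min_unsat_one_singular_distinct:
  assumes "min_unsat F" "{E \<in> F. x \<in> E} = {P}" "{E \<in> F. comp x \<in> E} = {Q}"
  shows "P \<noteq> Q"
  using assms min_unsat_comp_notin[of F P x] by auto

lemma DP_one_singular:
  assumes MU: "min_unsat F"
    and P: "{E \<in> F. x \<in> E} = {P}" and Q: "{E \<in> F. comp x \<in> E} = {Q}"
  shows "DP (var x) F = (F - {P, Q}) \<union> {(P \<union> Q) - {x, comp x}}"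
  using DP_singular[OF MU P] Q by (simp add: Un_commute insert_commute)

lemma ldeg_DP_one_singular:
  assumes MU: "min_unsat F"
    and P: "{E \<in> F. x \<in> E} = {P}" and Q: "{E \<in> F. comp x \<in> E} = {Q}"
    and "var z \<noteq> var x"
  shows "ldeg F z = ldeg (DP (var x) F) z + (if z \<in> P \<and> z \<in> Q then 1 else 0)"
proof -
  define R where "R = (P \<union> Q) - {x, comp x}"
  have "P \<in> F" "x \<in> P" "Q \<in> F" "comp x \<in> Q" using P Q by auto
  have "P \<noteq> Q" using min_unsat_one_singular_distinct[OF MU P Q] .
  have "R \<notin> F" using min_unsat_resolvent_notin[OF MU P Q] by (simp add: R_def)
  have z_R: "z \<in> R \<longleftrightarrow> z \<in> P \<or> z \<in> Q"
    using \<open>var z \<noteq> var x\<close> by (auto simp: R_def var_eq_iff)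
  define S where "S = {E \<in> F - {P, Q}. z \<in> E}"
  have "finite S" using min_unsat_finite[OF MU] by (simp add: S_def)
  have split_F: "{E \<in> F. z \<in> E} = S \<union> {E \<in> {P, Q}. z \<in> E}"
    using \<open>P \<in> F\<close> \<open>Q \<in> F\<close> by (auto simp: S_def)
  have split_DP: "{E \<in> DP (var x) F. z \<in> E} = S \<union> {E \<in> {R}. z \<in> E}"
    unfolding DP_one_singular[OF MU P Q] R_def[symmetric] by (auto simp: S_def)
  have "ldeg F z = card S + card {E \<in> {P, Q}. z \<in> E}"
    unfolding ldeg_def split_F using \<open>finite S\<close> by (intro card_Un_disjoint) (auto simp: S_def)
  moreover have "ldeg (DP (var x) F) z = card S + card {E \<in> {R}. z \<in> E}"
    unfolding ldeg_def split_DP using \<open>finite S\<close> \<open>R \<notin> F\<close> by (intro card_Un_disjoint) (auto simp: S_def)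
  moreover have "card {E \<in> {P, Q}. z \<in> E} = card {E \<in> {R}. z \<in> E} + (if z \<in> P \<and> z \<in> Q then 1 else 0)"
  proof -
    have filter_PQ: "{E \<in> {P, Q}. z \<in> E} = (if z \<in> P then {P} else {}) \<union> (if z \<in> Q then {Q} else {})"
      by auto
    have filter_R: "{E \<in> {R}. z \<in> E} = (if z \<in> R then {R} else {})"
      by auto
    show ?thesis
      unfolding filter_PQ filter_R using \<open>P \<noteq> Q\<close> z_R by (cases "z \<in> P"; cases "z \<in> Q") simp_all
  qed
  ultimately show ?thesis by simp
qed

lemma ldeg_DP_one_singular_unit:
  assumes MU: "min_unsat F"
    and P: "{E \<in> F. x \<in> E} = {P}" and Q: "{E \<in> F. comp x \<in> E} = {Q}"
    and "var z \<noteq> var x" and "ldeg F z = 1"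
  shows "ldeg (DP (var x) F) z = 1"
proof -
  have "\<not> (z \<in> P \<and> z \<in> Q)"
  proof
    assume "z \<in> P \<and> z \<in> Q"
    moreover have "P \<in> F" "Q \<in> F" using P Q by auto
    ultimately have "{P, Q} \<subseteq> {E \<in> F. z \<in> E}" "P \<noteq> Q"
      using min_unsat_one_singular_distinct[OF MU P Q] by auto
    then have "card {P, Q} \<le> ldeg F z"
      unfolding ldeg_def using min_unsat_finite[OF MU] by (intro card_mono) auto
    with \<open>P \<noteq> Q\<close> have "2 \<le> ldeg F z" by simp
    with \<open>ldeg F z = 1\<close> show False by simp
  qed
  with ldeg_DP_one_singular[OF assms(1-4)] \<open>ldeg F z = 1\<close> show ?thesis by simp
qed

lemma ldeg_DP_singular_side_unit:
  assumes MU: "min_unsat F"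
    and E0: "{E \<in> F. x \<in> E} = {E0}" and A: "{E \<in> F. z \<in> E} = {A}" and "comp x \<in> A"
    and "var z \<noteq> var x"
  shows "ldeg (DP (var x) F) z = 1"
proof -
  have "E0 \<in> F" "x \<in> E0" "A \<in> F" "z \<in> A" using E0 A by auto
  have "z \<notin> E0"
  proof
    assume "z \<in> E0"
    with mem_singleton_occurrences[OF A \<open>E0 \<in> F\<close>] have "E0 = A" by blast
    with min_unsat_comp_notin[OF MU \<open>E0 \<in> F\<close> \<open>x \<in> E0\<close>] \<open>comp x \<in> A\<close>
    show False by blast
  qed
  have "{E \<in> DP (var x) F. z \<in> E} = {(A \<union> E0) - {x, comp x}}"
    unfolding DP_singular[OF MU E0]
    using mem_singleton_occurrences[OF A] \<open>A \<in> F\<close> \<open>z \<in> A\<close> \<open>z \<notin> E0\<close> \<open>comp x \<in> A\<close> \<open>var z \<noteq> var x\<close>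
    by (auto simp: var_eq_iff)
  then show ?thesis by (simp add: ldeg_def)
qed

lemma m_singular_singular: "m_singular F v m \<Longrightarrow> singular F v"
  by (simp add: m_singular_def)

lemma ldeg_eq_1_iff: "finite F \<Longrightarrow> ldeg F x = 1 \<longleftrightarrow> (\<exists>P. {E \<in> F. x \<in> E} = {P})"
  by (simp add: ldeg_def card_1_singleton_iff)

lemma m_singular_iff_literal:
  assumes "var y = w"
  shows "m_singular F w m \<longleftrightarrow>
    min (ldeg F y) (ldeg F (comp y)) = 1 \<and> ldeg F y + ldeg F (comp y) - 1 = m"
  using assms by (cases y) (auto simp: m_singular_def singular_def vdeg_def min.commute add.commute)

lemma m_singular_1_iff_literal:
  "var y = w \<Longrightarrow> m_singular F w 1 \<longleftrightarrow> ldeg F y = 1 \<and> ldeg F (comp y) = 1"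
  by (auto simp: m_singular_iff_literal min_def)

lemma m_singular_1_occurrences:
  assumes "finite F" "m_singular F v 1"
  obtains A B where "{E \<in> F. Pos v \<in> E} = {A}" "{E \<in> F. comp (Pos v) \<in> E} = {B}"
    and "{E \<in> F. v \<in> vars_cl E} = {A, B}"
proof -
  from \<open>m_singular F v 1\<close> have "ldeg F (Pos v) = 1" "ldeg F (comp (Pos v)) = 1"
    using m_singular_1_iff_literal[of "Pos v" v] by simp_all
  then obtain A B where A: "{E \<in> F. Pos v \<in> E} = {A}" and B: "{E \<in> F. comp (Pos v) \<in> E} = {B}"
    using ldeg_eq_1_iff[OF \<open>finite F\<close>] by meson
  moreover have "{E \<in> F. v \<in> vars_cl E} = {A, B}"
    using mem_singleton_occurrences[OF A] mem_singleton_occurrences[OF B] A B var_in_vars_cl[of "Pos v"]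
    by auto
  ultimately show ?thesis by (rule that)
qed

lemma ldeg_DP_eliminated: "var x = v \<Longrightarrow> ldeg (DP v F) x = 0"
proof -
  assume "var x = v"
  then have none: "{E \<in> DP v F. x \<in> E} = {}"
    using DP_var_notin[of _ v F] var_in_vars_cl[of x] by auto
  show ?thesis unfolding ldeg_def none by simp
qed

lemma singular_DP_neq: "singular (DP v F) w \<Longrightarrow> w \<noteq> v"
  using ldeg_DP_eliminated[of "Pos v" v F] ldeg_DP_eliminated[of "Neg v" v F]
  by (auto simp: singular_def)

lemma shared_literal_of_one_singular:
  assumes MU: "min_unsat F"
    and A: "{E \<in> F. x \<in> E} = {A}" and B: "{E \<in> F. comp x \<in> E} = {B}"
    and "var y \<noteq> var x" and "m_singular (DP (var x) F) (var y) 1"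
    and "y \<in> A" "y \<in> B"
  shows "m_singular F (var y) 2"
    and "\<And>z. var z = var y \<Longrightarrow> ldeg F z = 1 \<Longrightarrow> {E \<in> F. comp z \<in> E} = {A, B}"
    and "m_singular (DP (var y) F) (var x) 1"
proof -
  have "A \<in> F" "B \<in> F" using A B by auto
  have DP_y: "ldeg (DP (var x) F) y = 1" "ldeg (DP (var x) F) (comp y) = 1"
    using \<open>m_singular (DP (var x) F) (var y) 1\<close> m_singular_1_iff_literal[of y] by auto
  have "comp y \<notin> A" using min_unsat_comp_notin[OF MU \<open>A \<in> F\<close> \<open>y \<in> A\<close>] .
  have "ldeg F y = 2"
    using ldeg_DP_one_singular[OF MU A B \<open>var y \<noteq> var x\<close>] DP_y \<open>y \<in> A\<close> \<open>y \<in> B\<close> by simp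
  moreover have "ldeg F (comp y) = 1"
    using ldeg_DP_one_singular[OF MU A B, of "comp y"] \<open>var y \<noteq> var x\<close> DP_y \<open>comp y \<notin> A\<close> by simp
  ultimately show "m_singular F (var y) 2" using m_singular_iff_literal[of y] by simp
  from \<open>ldeg F (comp y) = 1\<close> obtain E0 where E0: "{E \<in> F. comp y \<in> E} = {E0}"
    using ldeg_eq_1_iff[OF min_unsat_finite[OF MU]] by blast
  have "A \<noteq> B" using min_unsat_one_singular_distinct[OF MU A B] .
  have "{A, B} \<subseteq> {E \<in> F. y \<in> E}" using \<open>A \<in> F\<close> \<open>B \<in> F\<close> \<open>y \<in> A\<close> \<open>y \<in> B\<close> by auto
  moreover have "card {A, B} = card {E \<in> F. y \<in> E}"
    using \<open>ldeg F y = 2\<close> \<open>A \<noteq> B\<close> by (simp add: ldeg_def)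
  ultimately have side: "{E \<in> F. y \<in> E} = {A, B}"
    using min_unsat_finite[OF MU] by (intro card_subset_eq[symmetric]) auto
  show "{E \<in> F. comp z \<in> E} = {A, B}" if "var z = var y" "ldeg F z = 1" for z
  proof -
    from \<open>var z = var y\<close> have "z = y \<or> z = comp y" by (simp add: var_eq_iff[symmetric])
    with \<open>ldeg F z = 1\<close> \<open>ldeg F y = 2\<close> have "comp z = y" by auto
    with side show ?thesis by simp
  qed
  have "ldeg (DP (var y) F) x = 1"
    using ldeg_DP_singular_side_unit[OF MU E0 A] \<open>y \<in> A\<close> \<open>var y \<noteq> var x\<close> by simp
  moreover have "ldeg (DP (var y) F) (comp x) = 1"
    using ldeg_DP_singular_side_unit[OF MU E0 B] \<open>y \<in> B\<close> \<open>var y \<noteq> var x\<close> by simp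
  ultimately show "m_singular (DP (var y) F) (var x) 1"
    using m_singular_1_iff_literal[of x] by simp
qed

lemma card_Int_doubletons_le_1:
  assumes "{A, B} \<noteq> {A', B'}"
  shows "card ({A, B} \<inter> {A', B'}) \<le> 1"
proof -
  from assms obtain a where "{A, B} \<inter> {A', B'} \<subseteq> {a}" by auto
  then have "card ({A, B} \<inter> {A', B'}) \<le> card {a}" by (intro card_mono) auto
  then show ?thesis by simp
qed

lemma unshared_literal_of_one_singular:
  assumes MU: "min_unsat F"
    and A: "{E \<in> F. x \<in> E} = {A}" and B: "{E \<in> F. comp x \<in> E} = {B}"
    and "var y \<noteq> var x" and "m_singular (DP (var x) F) (var y) 1"
    and "\<not> (y \<in> A \<and> y \<in> B)" "\<not> (comp y \<in> A \<and> comp y \<in> B)"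
  shows "m_singular F (var y) 1" "m_singular (DP (var y) F) (var x) 1"
    and "card ({A, B} \<inter> {E \<in> F. var y \<in> vars_cl E}) \<le> 1"
proof -
  have "A \<in> F" "B \<in> F" "comp x \<in> B" using A B by auto
  have DP_y: "ldeg (DP (var x) F) y = 1" "ldeg (DP (var x) F) (comp y) = 1"
    using \<open>m_singular (DP (var x) F) (var y) 1\<close> m_singular_1_iff_literal[of y] by auto
  have "ldeg F y = 1"
    using ldeg_DP_one_singular[OF MU A B \<open>var y \<noteq> var x\<close>] DP_y(1) assms(6) by simp
  moreover have "ldeg F (comp y) = 1"
    using ldeg_DP_one_singular[OF MU A B, of "comp y"] \<open>var y \<noteq> var x\<close> DP_y(2) assms(7) by simp
  ultimately show "m_singular F (var y) 1" using m_singular_1_iff_literal[of y] by simp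
  from \<open>ldeg F y = 1\<close> \<open>ldeg F (comp y) = 1\<close> obtain A' B'
    where A': "{E \<in> F. y \<in> E} = {A'}" and B': "{E \<in> F. comp y \<in> E} = {B'}"
    using ldeg_eq_1_iff[OF min_unsat_finite[OF MU]] by meson
  have "var x \<noteq> var y" using \<open>var y \<noteq> var x\<close> by simp
  have "ldeg F x = 1" "ldeg F (comp x) = 1" using A B by (simp_all add: ldeg_def)
  with \<open>var x \<noteq> var y\<close> have "ldeg (DP (var y) F) x = 1" "ldeg (DP (var y) F) (comp x) = 1"
    by (simp_all add: ldeg_DP_one_singular_unit[OF MU A' B'])
  then show "m_singular (DP (var y) F) (var x) 1" using m_singular_1_iff_literal[of x] by simp
  have "{A, B} \<noteq> {A', B'}"
  proof
    assume same: "{A, B} = {A', B'}"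
    have "y \<in> A'" "comp y \<in> B'" using A' B' by auto
    have clash: "B \<inter> comp ` A = {comp x}"
      using min_unsat_singular_clash_iff[OF MU A \<open>B \<in> F\<close> \<open>A \<in> F\<close>] \<open>comp x \<in> B\<close> by simp
    from same consider "A' = A" "B' = B" | "A' = B" "B' = A"
      unfolding doubleton_eq_iff by blast
    then show False
    proof cases
      case 1
      with \<open>y \<in> A'\<close> \<open>comp y \<in> B'\<close> have "comp y \<in> B \<inter> comp ` A" by (simp add: comp_image_iff)
      with clash \<open>var y \<noteq> var x\<close> show False by (auto simp: comp_eq_iff)
    next
      case 2
      with \<open>y \<in> A'\<close> \<open>comp y \<in> B'\<close> have "y \<in> B \<inter> comp ` A" by (simp add: comp_image_iff)
      with clash \<open>var y \<noteq> var x\<close> show False by auto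
    qed
  qed
  moreover have "{E \<in> F. var y \<in> vars_cl E} = {A', B'}"
    using A' B' by (auto simp: var_in_vars_cl)
  ultimately show "card ({A, B} \<inter> {E \<in> F. var y \<in> vars_cl E}) \<le> 1"
    by (simp only:) (rule card_Int_doubletons_le_1)
qed

theorem lemma39:
  fixes F :: "'v clause set" and v w :: 'v and C D :: "'v clause"
  assumes "min_unsat F"
    and "singular_tuple F v w"
    and "sdeg_tuple F v w 1 1"
    and "{E \<in> F. v \<in> vars_cl E} = {C, D}"
  shows "(\<not> m_singular F w 1 \<longrightarrow>
            m_singular F w 2
          \<and> (\<forall>x E0 E1 E2. var x = w \<and> ldeg F x = 1 \<and> E0 \<in> F \<and> x \<in> E0
                \<and> {E \<in> F. comp x \<in> E} = {E1, E2} \<longrightarrow> {E1, E2} = {C, D})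
          \<and> m_singular (DP w F) v 1
          \<and> singular_tuple F w v \<and> sdeg_tuple F w v 2 1)
       \<and> (m_singular F w 1 \<longrightarrow>
            m_singular (DP w F) v 1
          \<and> singular_tuple F w v \<and> sdeg_tuple F w v 1 1
          \<and> (\<forall>E1 E2. {E \<in> F. w \<in> vars_cl E} = {E1, E2} \<longrightarrow>
                card ({C, D} \<inter> {E1, E2}) \<le> 1))"
proof -
  note MU = \<open>min_unsat F\<close>
  from \<open>sdeg_tuple F v w 1 1\<close> have v: "m_singular F v 1" and w: "m_singular (DP v F) w 1"
    by (simp_all add: sdeg_tuple_def)
  obtain A B where A: "{E \<in> F. Pos v \<in> E} = {A}" and B: "{E \<in> F. comp (Pos v) \<in> E} = {B}"
    and "{E \<in> F. v \<in> vars_cl E} = {A, B}"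
    using m_singular_1_occurrences[OF min_unsat_finite[OF MU] v] .
  with \<open>{E \<in> F. v \<in> vars_cl E} = {C, D}\<close> have CD: "{C, D} = {A, B}" by simp
  from w have "w \<noteq> v" using singular_DP_neq[of v F w] by (simp add: m_singular_def)
  with w have w_v: "var (Pos w) \<noteq> var (Pos v)" "m_singular (DP (var (Pos v)) F) (var (Pos w)) 1"
    by simp_all
  show ?thesis
  proof (cases "\<exists>y. var y = w \<and> y \<in> A \<and> y \<in> B")
    case True
    then obtain y where "var y = w" "y \<in> A" "y \<in> B" by blast
    with w_v have "var y \<noteq> var (Pos v)" "m_singular (DP (var (Pos v)) F) (var y) 1" by simp_all
    note shared = shared_literal_of_one_singular[OF MU A B this \<open>y \<in> A\<close> \<open>y \<in> B\<close>,
        unfolded \<open>var y = w\<close> var.simps]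
    have "\<not> m_singular F w 1" using shared(1) by (simp add: m_singular_def)
    moreover have "\<forall>x E0 E1 E2. var x = w \<and> ldeg F x = 1 \<and> E0 \<in> F \<and> x \<in> E0
        \<and> {E \<in> F. comp x \<in> E} = {E1, E2} \<longrightarrow> {E1, E2} = {A, B}"
      using shared(2) by (metis (no_types))
    ultimately show ?thesis
      using shared(1,3) m_singular_singular[OF shared(1)] m_singular_singular[OF shared(3)]
      unfolding CD singular_tuple_def sdeg_tuple_def by blast
  next
    case False
    then have "\<not> (Pos w \<in> A \<and> Pos w \<in> B)" "\<not> (comp (Pos w) \<in> A \<and> comp (Pos w) \<in> B)" by auto
    note unshared = unshared_literal_of_one_singular[OF MU A B w_v this, unfolded var.simps]
    then show ?thesis
      unfolding CD singular_tuple_def sdeg_tuple_def by (auto intro: m_singular_singular)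
  qed
qed

end
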